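(* Let $PC_n^1$ be the polyomino chain with $n$ squares and exactly two segments $s_1,s_2$ with lengths $l_1=2$ and $l_2=n-1$. Then $ZC_1(PC_n^1)=32n-30-2I_{\{n=4\}}$ for $n\ge 4$, and $ZC_2(PC_n^1)=48n-58-I_{\{n=5\}}$ for $n\ge 5$.
   Context: A polyomino chain with $n$ squares is a sequence of $n$ unit squares in the plane in which consecutive squares share exactly one edge and the centers of consecutive squares form a path; it is regarded as the graph whose vertices are the corners of the squares and whose edges are the sides of the squares. A square is terminal if it has exactly one adjacent square, kink if it has two adjacent squares and contains a vertex of degree 2. A segment is a maximal linear (straight) subchain, including the kink and/or terminal squares at its ends; consecutive segments share a kink square, and the length of a segment is its number of squares. For a vertex $v$, $\tau_v$ is the number of vertices at distance exactly $2$ from $v$; $ZC_1(G)=\sum_{v\in V(G)}\tau_v^2$ and $ZC_2(G)=\sum_{uv\in E(G)}\tau_u\tau_v$. $I_{\{A\}}$ is the indicator of condition $A$. *)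

theory Defs
  imports Main
begin

type_synonym pt = "int \<times> int"

text \<open>A unit square is identified with its lower-left corner p = (a,b);
  its corners are (a,b),(a+1,b),(a+1,b+1),(a,b+1) and its sides are the four
  unit segments between consecutive corners (edges are 2-element sets).\<close>

definition sq_corners :: "pt \<Rightarrow> pt set" where
  "sq_corners p = (case p of (a,b) \<Rightarrow> {(a,b),(a+1,b),(a+1,b+1),(a,b+1)})"

definition sq_sides :: "pt \<Rightarrow> pt set set" where
  "sq_sides p = (case p of (a,b) \<Rightarrow>
     {{(a,b),(a+1,b)}, {(a+1,b),(a+1,b+1)}, {(a+1,b+1),(a,b+1)}, {(a,b+1),(a,b)}})"

definition chain_V :: "(nat \<Rightarrow> pt) \<Rightarrow> nat \<Rightarrow> pt set" where
  "chain_V c n = (\<Union>i<n. sq_corners (c i))"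

definition chain_E :: "(nat \<Rightarrow> pt) \<Rightarrow> nat \<Rightarrow> pt set set" where
  "chain_E c n = (\<Union>i<n. sq_sides (c i))"

definition adj_rel :: "pt set set \<Rightarrow> (pt \<times> pt) set" where
  "adj_rel E = {(u,v). {u,v} \<in> E \<and> u \<noteq> v}"

definition gdist :: "pt set set \<Rightarrow> pt \<Rightarrow> pt \<Rightarrow> nat" where
  "gdist E u v = (LEAST k. (u,v) \<in> (adj_rel E) ^^ k)"

definition tau :: "pt set \<Rightarrow> pt set set \<Rightarrow> pt \<Rightarrow> nat" where
  "tau V E v = card {w \<in> V. (v,w) \<in> (adj_rel E)\<^sup>* \<and> gdist E v w = 2}"

definition ZC1 :: "pt set \<Rightarrow> pt set set \<Rightarrow> nat" where
  "ZC1 V E = (\<Sum>v\<in>V. (tau V E v)^2)"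

definition ZC2 :: "pt set \<Rightarrow> pt set set \<Rightarrow> nat" where
  "ZC2 V E = (\<Sum>e\<in>E. \<Prod>v\<in>e. tau V E v)"

definition step_dir :: "(nat \<Rightarrow> pt) \<Rightarrow> nat \<Rightarrow> pt" where
  "step_dir c i = (fst (c (Suc i)) - fst (c i), snd (c (Suc i)) - snd (c i))"

text \<open>c 0, ..., c (n-1) is a polyomino chain with exactly two segments, of lengths
  2 (squares 0,1) and n-1 (squares 1,...,n-1): consecutive squares share an edge
  (unit step between corners), the squares are distinct, the direction changes at
  square 1 (a kink) and is constant afterwards.\<close>
definition is_PC1 :: "(nat \<Rightarrow> pt) \<Rightarrow> nat \<Rightarrow> bool" where
  "is_PC1 c n \<longleftrightarrow> n \<ge> 3 \<and> inj_on c {..<n}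
     \<and> (\<forall>i. Suc i < n \<longrightarrow> step_dir c i \<in> {(1,0),(-1,0),(0,1),(0,-1)})
     \<and> step_dir c 1 \<noteq> step_dir c 0
     \<and> (\<forall>i. 1 \<le> i \<and> Suc i < n \<longrightarrow> step_dir c i = step_dir c 1)"

end

theory Submission
  imports Defs
begin

text \<open>The first two steps a, b of the chain are orthogonal unit vectors, so the chain is the
  image of a standard chain (the square at the origin followed by the column of squares
  (1,0), ..., (1,n-2)) under the lattice isometry (x,y) \<mapsto> c 0 + x a + y b. This isometry
  induces an isomorphism of the corner graphs, and ZC1, ZC2 are isomorphism invariants. The
  corner graph of the standard chain is a ladder with two extra vertices; there tau v, the size
  of N(N(v)) - N(v) - {v}, equals 4 except near the two ends, and summing the deviations gives
  the linear formulas. The indicator terms appear when n is so small that the two ends interact.\<close>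

section \<open>Vertices at distance two and graph isomorphisms\<close>

lemma Least_eq_2_iff:
  assumes "\<exists>k. P k"
  shows "(LEAST k::nat. P k) = 2 \<longleftrightarrow> P 2 \<and> \<not> P 0 \<and> \<not> P 1"
proof
  assume "(LEAST k. P k) = 2"
  then show "P 2 \<and> \<not> P 0 \<and> \<not> P 1"
    using LeastI_ex[OF assms] not_less_Least[of 0 P] not_less_Least[of 1 P] by simp
next
  assume "P 2 \<and> \<not> P 0 \<and> \<not> P 1"
  then show "(LEAST k. P k) = 2"
    by (intro Least_equality) (auto, metis less_2_cases not_le)
qed

definition second_nbhd :: "pt set \<Rightarrow> pt set set \<Rightarrow> pt \<Rightarrow> pt set" where
  "second_nbhd V E v =
     {w \<in> V. w \<noteq> v \<and> (v,w) \<notin> adj_rel E \<and> (\<exists>u. (v,u) \<in> adj_rel E \<and> (u,w) \<in> adj_rel E)}"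

lemma gdist_eq_2_iff:
  assumes "(v,w) \<in> (adj_rel E)\<^sup>*"
  shows "gdist E v w = 2 \<longleftrightarrow>
    w \<noteq> v \<and> (v,w) \<notin> adj_rel E \<and> (\<exists>u. (v,u) \<in> adj_rel E \<and> (u,w) \<in> adj_rel E)"
  using assms unfolding gdist_def
  by (subst Least_eq_2_iff) (auto simp: numeral_2_eq_2 rtrancl_power)

lemma tau_eq_card_second_nbhd: "tau V E v = card (second_nbhd V E v)"
proof -
  have "(v,w) \<in> (adj_rel E)\<^sup>* \<and> gdist E v w = 2 \<longleftrightarrow>
        w \<noteq> v \<and> (v,w) \<notin> adj_rel E \<and> (\<exists>u. (v,u) \<in> adj_rel E \<and> (u,w) \<in> adj_rel E)" for w
  proof -
    have "(v,w) \<in> (adj_rel E)\<^sup>*" if "(v,u) \<in> adj_rel E" "(u,w) \<in> adj_rel E" for u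
      using that by (meson converse_rtrancl_into_rtrancl r_into_rtrancl)
    then show ?thesis using gdist_eq_2_iff[of v w E] by blast
  qed
  then show ?thesis
    unfolding tau_def second_nbhd_def by (metis (no_types, lifting))
qed

lemma second_nbhd_eq_nbrs:
  assumes "\<And>p q. (p,q) \<in> adj_rel E \<longleftrightarrow> q \<in> N p" and "\<And>p. N p \<subseteq> V"
  shows "second_nbhd V E v = (\<Union>u\<in>N v. N u) - N v - {v}"
  unfolding second_nbhd_def assms(1) using assms(2) by blast

lemma adj_rel_image_iff:
  assumes "inj T"
  shows "(T u, T v) \<in> adj_rel ((`) T ` E) \<longleftrightarrow> (u,v) \<in> adj_rel E"
proof -
  have "inj ((`) T)" using assms by (meson inj_image_eq_iff inj_onI)
  then have "T ` {u,v} \<in> (`) T ` E \<longleftrightarrow> {u,v} \<in> E"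
    by (rule inj_image_mem_iff)
  then show ?thesis unfolding adj_rel_def using inj_eq[OF assms] by auto
qed

lemma adj_rel_image_range:
  assumes "(x,y) \<in> adj_rel ((`) T ` E)"
  shows "x \<in> range T \<and> y \<in> range T"
  using assms unfolding adj_rel_def by (auto simp: doubleton_eq_iff)

lemma second_nbhd_image:
  assumes "inj T"
  shows "second_nbhd (T ` V) ((`) T ` E) (T v) = T ` second_nbhd V E v"
proof (intro set_eqI iffI)
  fix w' assume "w' \<in> second_nbhd (T ` V) ((`) T ` E) (T v)"
  then obtain w u' where w: "w' = T w" "w \<in> V" "T w \<noteq> T v"
    "(T v, T w) \<notin> adj_rel ((`) T ` E)"
    "(T v, u') \<in> adj_rel ((`) T ` E)" "(u', T w) \<in> adj_rel ((`) T ` E)"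
    unfolding second_nbhd_def by auto
  then obtain u where "u' = T u" using adj_rel_image_range by blast
  then have "w \<in> second_nbhd V E v"
    using w adj_rel_image_iff[OF assms] unfolding second_nbhd_def by blast
  then show "w' \<in> T ` second_nbhd V E v" using w by auto
next
  fix w' assume "w' \<in> T ` second_nbhd V E v"
  then obtain w u where w: "w' = T w" "w \<in> V" "w \<noteq> v" "(v, w) \<notin> adj_rel E"
    "(v, u) \<in> adj_rel E" "(u, w) \<in> adj_rel E"
    unfolding second_nbhd_def by auto
  then have "T w \<in> T ` V" "T w \<noteq> T v" "(T v, T w) \<notin> adj_rel ((`) T ` E)"
    "(T v, T u) \<in> adj_rel ((`) T ` E)" "(T u, T w) \<in> adj_rel ((`) T ` E)"
    using inj_eq[OF assms] adj_rel_image_iff[OF assms] by auto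
  then show "w' \<in> second_nbhd (T ` V) ((`) T ` E) (T v)"
    unfolding second_nbhd_def w(1) by blast
qed

lemma tau_image:
  assumes "inj T"
  shows "tau (T ` V) ((`) T ` E) (T v) = tau V E v"
  unfolding tau_eq_card_second_nbhd second_nbhd_image[OF assms]
  by (rule card_image[OF inj_on_subset[OF assms]]) simp

lemma ZC1_image:
  assumes "inj T"
  shows "ZC1 (T ` V) ((`) T ` E) = ZC1 V E"
  unfolding ZC1_def by (simp add: sum.reindex inj_on_subset[OF assms] tau_image[OF assms])

lemma ZC2_image:
  assumes "inj T"
  shows "ZC2 (T ` V) ((`) T ` E) = ZC2 V E"
proof -
  have "inj_on ((`) T) E" using assms by (meson inj_image_eq_iff inj_onI)
  then have "ZC2 (T ` V) ((`) T ` E) = (\<Sum>e\<in>E. \<Prod>v\<in>T ` e. tau (T ` V) ((`) T ` E) v)"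
    unfolding ZC2_def by (simp add: sum.reindex)
  also have "\<dots> = (\<Sum>e\<in>E. \<Prod>v\<in>e. tau V E v)"
    by (simp add: prod.reindex inj_on_subset[OF assms] tau_image[OF assms])
  finally show ?thesis unfolding ZC2_def .
qed

section \<open>Lattice isometries\<close>

definition unit_steps :: "pt set" where
  "unit_steps = {(1,0), (-1,0), (0,1), (0,-1)}"

definition orthonormal :: "pt \<Rightarrow> pt \<Rightarrow> bool" where
  "orthonormal a b \<longleftrightarrow> a \<in> unit_steps \<and> b \<in> unit_steps \<and> fst a * fst b + snd a * snd b = 0"

definition lattice_map :: "pt \<Rightarrow> pt \<Rightarrow> pt \<Rightarrow> pt \<Rightarrow> pt" where
  "lattice_map q a b p =
     (fst q + fst p * fst a + snd p * fst b, snd q + fst p * snd a + snd p * snd b)"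

definition translate :: "pt \<Rightarrow> pt \<Rightarrow> pt" where
  "translate p d = (fst p + fst d, snd p + snd d)"

lemma orthonormal_cases:
  assumes "orthonormal a b"
  obtains "a = (1,0)" "b = (0,1)" | "a = (1,0)" "b = (0,-1)" | "a = (-1,0)" "b = (0,1)"
    | "a = (-1,0)" "b = (0,-1)" | "a = (0,1)" "b = (1,0)" | "a = (0,1)" "b = (-1,0)"
    | "a = (0,-1)" "b = (1,0)" | "a = (0,-1)" "b = (-1,0)"
  using assms unfolding orthonormal_def unit_steps_def by auto

lemma inj_lattice_map: "orthonormal a b \<Longrightarrow> inj (lattice_map q a b)"
  by (elim orthonormal_cases) (auto simp: inj_def lattice_map_def)

lemma lattice_map_translate:
  "lattice_map (translate q s) a b (translate p d) = translate (lattice_map q a b p) (lattice_map s a b d)"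
  by (simp add: lattice_map_def translate_def algebra_simps)

lemma sq_corners_translate: "sq_corners p = translate p ` sq_corners (0,0)"
  by (cases p) (simp add: sq_corners_def translate_def)

lemma sq_sides_translate: "sq_sides p = (`) (translate p) ` sq_sides (0,0)"
  by (cases p) (simp add: sq_sides_def translate_def)

text \<open>With this origin, the lattice map sends the unit square at (0,0) onto itself.\<close>
definition corner_offset :: "pt \<Rightarrow> pt \<Rightarrow> pt" where
  "corner_offset a b = (- min (fst a) 0 - min (fst b) 0, - min (snd a) 0 - min (snd b) 0)"

lemma lattice_map_unit_square:
  assumes "orthonormal a b"
  shows "lattice_map (corner_offset a b) a b ` sq_corners (0,0) = sq_corners (0,0)"
    and "(`) (lattice_map (corner_offset a b) a b) ` sq_sides (0,0) = sq_sides (0,0)"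
  using assms
  by (elim orthonormal_cases;
      simp add: sq_corners_def sq_sides_def lattice_map_def corner_offset_def insert_commute; blast?)+

lemma lattice_map_square:
  assumes "orthonormal a b"
  shows "sq_corners (lattice_map q a b p)
           = lattice_map (translate q (corner_offset a b)) a b ` sq_corners p"
    and "sq_sides (lattice_map q a b p)
           = (`) (lattice_map (translate q (corner_offset a b)) a b) ` sq_sides p"
proof -
  let ?T = "lattice_map (translate q (corner_offset a b)) a b"
  let ?P = "translate (lattice_map q a b p)" and ?R = "lattice_map (corner_offset a b) a b"
  have T: "?T \<circ> translate p = ?P \<circ> ?R"
    by (simp add: fun_eq_iff lattice_map_translate)
  have "?T ` sq_corners p = ?P ` ?R ` sq_corners (0,0)"
    unfolding sq_corners_translate[of p] image_comp T ..
  then show "sq_corners (lattice_map q a b p) = ?T ` sq_corners p"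
    by (simp only: lattice_map_unit_square(1)[OF assms] sq_corners_translate[symmetric])
  have "(`) ?T \<circ> (`) (translate p) = (`) ?P \<circ> (`) ?R"
    by (simp add: fun_eq_iff image_comp T)
  then have "(`) ?T ` sq_sides p = (`) ?P ` (`) ?R ` sq_sides (0,0)"
    unfolding sq_sides_translate[of p] image_comp by simp
  then show "sq_sides (lattice_map q a b p) = (`) ?T ` sq_sides p"
    by (simp only: lattice_map_unit_square(2)[OF assms] sq_sides_translate[symmetric])
qed

lemma ZC_lattice_map_chain:
  assumes "orthonormal a b" and "\<And>i. i < n \<Longrightarrow> c i = lattice_map q a b (d i)"
  shows "ZC1 (chain_V c n) (chain_E c n) = ZC1 (chain_V d n) (chain_E d n)"
    and "ZC2 (chain_V c n) (chain_E c n) = ZC2 (chain_V d n) (chain_E d n)"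
proof -
  let ?T = "lattice_map (translate q (corner_offset a b)) a b"
  have V: "chain_V c n = ?T ` chain_V d n"
    unfolding chain_V_def image_UN using assms lattice_map_square(1) by simp
  have E: "chain_E c n = (`) ?T ` chain_E d n"
    unfolding chain_E_def image_UN using assms lattice_map_square(2) by simp
  show "ZC1 (chain_V c n) (chain_E c n) = ZC1 (chain_V d n) (chain_E d n)"
    unfolding V E by (rule ZC1_image[OF inj_lattice_map[OF assms(1)]])
  show "ZC2 (chain_V c n) (chain_E c n) = ZC2 (chain_V d n) (chain_E d n)"
    unfolding V E by (rule ZC2_image[OF inj_lattice_map[OF assms(1)]])
qed

section \<open>The standard chain\<close>

definition std_square :: "nat \<Rightarrow> pt" where
  "std_square i = (if i = 0 then (0,0) else (1, int i - 1))"

definition std_V :: "nat \<Rightarrow> pt set" where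
  "std_V n = {(0,0), (0,1)} \<union> (\<lambda>k. (1, int k)) ` {..<n} \<union> (\<lambda>k. (2, int k)) ` {..<n}"

definition std_E :: "nat \<Rightarrow> pt set set" where
  "std_E n = {{(0,0),(1,0)}, {(0,0),(0,1)}, {(0,1),(1,1)}}
     \<union> (\<lambda>k. {(1, int k),(2, int k)}) ` {..<n}
     \<union> (\<lambda>k. {(1, int k),(1, int k + 1)}) ` {..<n-1}
     \<union> (\<lambda>k. {(2, int k),(2, int k + 1)}) ` {..<n-1}"

lemma column_corners:
  "(\<Union>k<Suc m. sq_corners (1, int k))
     = (\<lambda>k. (1, int k)) ` {..<Suc (Suc m)} \<union> (\<lambda>k. (2, int k)) ` {..<Suc (Suc m)}"
proof (induction m)
  case 0
  then show ?case by (auto simp: sq_corners_def lessThan_Suc)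
next
  case (Suc m)
  have "(\<Union>k<Suc (Suc m). sq_corners (1, int k))
      = sq_corners (1, int (Suc m)) \<union> (\<Union>k<Suc m. sq_corners (1, int k))"
    by (simp add: lessThan_Suc)
  then show ?case
    unfolding Suc.IH by (auto simp: sq_corners_def lessThan_Suc)
qed

lemma column_sides:
  "(\<Union>k<Suc m. sq_sides (1, int k))
     = (\<lambda>k. {(1, int k),(2, int k)}) ` {..<Suc (Suc m)}
       \<union> (\<lambda>k. {(1, int k),(1, int k + 1)}) ` {..<Suc m}
       \<union> (\<lambda>k. {(2, int k),(2, int k + 1)}) ` {..<Suc m}"
proof (induction m)
  case 0
  then show ?case by (auto simp: sq_sides_def lessThan_Suc insert_commute)
next
  case (Suc m)
  have "(\<Union>k<Suc (Suc m). sq_sides (1, int k))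
      = sq_sides (1, int (Suc m)) \<union> (\<Union>k<Suc m. sq_sides (1, int k))"
    by (simp add: lessThan_Suc)
  then show ?case
    unfolding Suc.IH by (auto simp: sq_sides_def lessThan_Suc insert_commute)
qed

lemma chain_std_square:
  assumes "n \<ge> 2"
  shows "chain_V std_square n = std_V n" and "chain_E std_square n = std_E n"
proof -
  obtain m where m: "n = Suc (Suc m)" using assms by (metis add_2_eq_Suc le_Suc_ex)
  have idx: "{..<n} = insert 0 (Suc ` {..<Suc m})"
    unfolding m by (rule lessThan_Suc_eq_insert_0)
  have "chain_V std_square n = sq_corners (0,0) \<union> (\<Union>k<Suc m. sq_corners (1, int k))"
    unfolding chain_V_def idx by (simp add: std_square_def)
  then show "chain_V std_square n = std_V n"
    unfolding column_corners std_V_def m by (auto simp: sq_corners_def)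
  have E: "chain_E std_square n = sq_sides (0,0) \<union> (\<Union>k<Suc m. sq_sides (1, int k))"
    unfolding chain_E_def idx by (simp add: std_square_def)
  have square0: "sq_sides (0,0) = {{(0,0),(1,0)}, {(0,0),(0,1)}, {(0,1),(1,1)}} \<union> {{(1,0),(1,1)}}"
    by (auto simp: sq_sides_def insert_commute)
  have rail0: "{(1::int, 0::int), (1, 1)} \<in> (\<lambda>k. {(1, int k),(1, int k + 1)}) ` {..<Suc m}"
    by (auto simp: image_iff intro!: bexI[of _ 0])
  have absorb: "D \<in> L \<Longrightarrow> (X \<union> {D}) \<union> (H \<union> L \<union> R) = X \<union> H \<union> L \<union> R"
    for X H L R :: "'a set" and D :: 'a
    by blast
  show "chain_E std_square n = std_E n"
    unfolding E square0 column_sides unfolding std_E_def m diff_Suc_1 by (rule absorb[OF rail0])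
qed

lemma translate_step_dir: "c (Suc i) = translate (c i) (step_dir c i)"
  by (simp add: translate_def step_dir_def)

lemma is_PC1_lattice_map:
  assumes "is_PC1 c n" and "i < n"
  shows "c i = lattice_map (c 0) (step_dir c 0) (step_dir c 1) (std_square i)"
proof (cases i)
  case 0
  then show ?thesis by (simp add: lattice_map_def std_square_def)
next
  case (Suc m)
  let ?a = "step_dir c 0" and ?b = "step_dir c 1"
  have straight: "step_dir c j = ?b" if "1 \<le> j" "Suc j < n" for j
    using assms(1) that unfolding is_PC1_def by blast
  have "Suc k < n \<Longrightarrow> c (Suc k) = lattice_map (c 0) ?a ?b (1, int k)" for k
  proof (induction k)
    case 0
    show ?case by (simp add: translate_step_dir[of c 0] translate_def lattice_map_def)
  next
    case (Suc k)
    then have "c (Suc (Suc k)) = translate (lattice_map (c 0) ?a ?b (1, int k)) ?b"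
      using straight[of "Suc k"] translate_step_dir[of c "Suc k"] by simp
    then show ?case by (simp add: translate_def lattice_map_def algebra_simps)
  qed
  with Suc assms(2) show ?thesis by (simp add: std_square_def)
qed

lemma is_PC1_orthonormal:
  assumes "is_PC1 c n"
  shows "orthonormal (step_dir c 0) (step_dir c 1)"
proof -
  let ?a = "step_dir c 0" and ?b = "step_dir c 1"
  have n: "n \<ge> 3" and inj: "inj_on c {..<n}" and ab: "?b \<noteq> ?a"
    and steps: "\<forall>i. Suc i < n \<longrightarrow> step_dir c i \<in> unit_steps"
    using assms unfolding is_PC1_def unit_steps_def by metis+
  have a: "?a \<in> unit_steps" and b: "?b \<in> unit_steps"
    using steps n by simp_all
  have "c 2 \<noteq> c 0" using inj_onD[OF inj, of 2 0] n by auto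
  then have "?b \<noteq> (- fst ?a, - snd ?a)"
    using is_PC1_lattice_map[OF assms, of 2] n
    by (auto simp: lattice_map_def std_square_def)
  with a b ab show ?thesis
    unfolding orthonormal_def unit_steps_def insert_iff empty_iff by (elim disjE) simp_all
qed

lemma ex_less_int_iff: "(\<exists>k<n. P (int k)) \<longleftrightarrow> (\<exists>y. 0 \<le> y \<and> y < int n \<and> P y)"
  by (metis nonneg_int_cases of_nat_0_le_iff of_nat_less_iff)

lemma mem_std_V:
  "(x,y) \<in> std_V n \<longleftrightarrow> x = 0 \<and> (y = 0 \<or> y = 1) \<or> (x = 1 \<or> x = 2) \<and> 0 \<le> y \<and> y < int n"
proof -
  have "(x,y) \<in> (\<lambda>k. (a, int k)) ` {..<n} \<longleftrightarrow> (\<exists>z. 0 \<le> z \<and> z < int n \<and> (x,y) = (a,z))" for a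
    by (subst ex_less_int_iff[symmetric]) auto
  then show ?thesis unfolding std_V_def by auto
qed

lemma rung_mem_iff:
  "{(x,y),(x',y')} \<in> (\<lambda>k. {(a, int k),(b, int k)}) ` {..<n} \<longleftrightarrow>
     0 \<le> y \<and> y < int n \<and> y' = y \<and> (x = a \<and> x' = b \<or> x = b \<and> x' = a)"
proof -
  have "{(x,y),(x',y')} \<in> (\<lambda>k. {(a, int k),(b, int k)}) ` {..<n} \<longleftrightarrow>
      (\<exists>z. 0 \<le> z \<and> z < int n \<and> {(x,y),(x',y')} = {(a,z),(b,z)})"
    by (subst ex_less_int_iff[symmetric]) auto
  then show ?thesis by (auto simp: doubleton_eq_iff)
qed

lemma rail_mem_iff:
  "{(x,y),(x',y')} \<in> (\<lambda>k. {(a, int k),(a, int k + 1)}) ` {..<m} \<longleftrightarrow>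
     x = a \<and> x' = a \<and> (0 \<le> y \<and> y < int m \<and> y' = y + 1 \<or> 0 \<le> y' \<and> y' < int m \<and> y = y' + 1)"
proof -
  have "{(x,y),(x',y')} \<in> (\<lambda>k. {(a, int k),(a, int k + 1)}) ` {..<m} \<longleftrightarrow>
      (\<exists>z. 0 \<le> z \<and> z < int m \<and> {(x,y),(x',y')} = {(a,z),(a,z+1)})"
    by (subst ex_less_int_iff[symmetric]) auto
  then show ?thesis by (auto simp: doubleton_eq_iff)
qed

definition std_nbrs :: "nat \<Rightarrow> pt \<Rightarrow> pt set" where
  "std_nbrs n p = (case p of (x,y) \<Rightarrow>
     if x = 0 \<and> y = 0 then {(0,1), (1,0)}
     else if x = 0 \<and> y = 1 then {(0,0), (1,1)}
     else if (x = 1 \<or> x = 2) \<and> 0 \<le> y \<and> y < int n then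
       insert (3 - x, y)
         ((if 1 \<le> y then {(x, y - 1)} else {}) \<union> (if y + 1 < int n then {(x, y + 1)} else {})
          \<union> (if x = 1 \<and> y \<le> 1 then {(0, y)} else {}))
     else {})"

lemma adj_std_E_iff:
  assumes "n \<ge> 2"
  shows "(p, q) \<in> adj_rel (std_E n) \<longleftrightarrow> q \<in> std_nbrs n p"
proof -
  obtain x y x' y' where pq: "p = (x,y)" "q = (x',y')" by fastforce
  have "int (n - 1) = int n - 1" using assms by simp
  then have "{p, q} \<in> std_E n \<longleftrightarrow>
      x = 0 \<and> y = 0 \<and> x' = 1 \<and> y' = 0 \<or> x = 1 \<and> y = 0 \<and> x' = 0 \<and> y' = 0
    \<or> x = 0 \<and> y = 0 \<and> x' = 0 \<and> y' = 1 \<or> x = 0 \<and> y = 1 \<and> x' = 0 \<and> y' = 0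
    \<or> x = 0 \<and> y = 1 \<and> x' = 1 \<and> y' = 1 \<or> x = 1 \<and> y = 1 \<and> x' = 0 \<and> y' = 1
    \<or> 0 \<le> y \<and> y < int n \<and> y' = y \<and> (x = 1 \<and> x' = 2 \<or> x = 2 \<and> x' = 1)
    \<or> x = 1 \<and> x' = 1 \<and> (0 \<le> y \<and> y < int n - 1 \<and> y' = y + 1 \<or> 0 \<le> y' \<and> y' < int n - 1 \<and> y = y' + 1)
    \<or> x = 2 \<and> x' = 2 \<and> (0 \<le> y \<and> y < int n - 1 \<and> y' = y + 1 \<or> 0 \<le> y' \<and> y' < int n - 1 \<and> y = y' + 1)"
    unfolding pq std_E_def Un_iff rung_mem_iff rail_mem_iff by (simp add: doubleton_eq_iff)
  also have "\<dots> \<longleftrightarrow> q \<in> std_nbrs n p"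
    unfolding pq std_nbrs_def using assms
    by (cases "x = 0"; cases "x = 1"; cases "x = 2") auto
  finally have "{p, q} \<in> std_E n \<longleftrightarrow> q \<in> std_nbrs n p" .
  moreover have "p \<notin> std_nbrs n p"
    unfolding pq std_nbrs_def by simp
  ultimately show ?thesis
    unfolding adj_rel_def by blast
qed

lemma std_nbrs_subset: "n \<ge> 2 \<Longrightarrow> std_nbrs n p \<subseteq> std_V n"
  by (cases p) (auto simp: std_nbrs_def mem_std_V split: if_splits)

text \<open>The vertex (1,2) reaches both (0,1) and (1,0) across the kink and, unless n = 4, also (1,4).\<close>
definition std_tau :: "nat \<Rightarrow> pt \<Rightarrow> nat" where
  "std_tau n p = (case p of (x,y) \<Rightarrow>
    if x = 0 then (if y = 0 then 2 else 3)
    else if x = 1 then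
      (if y = 0 then 3 else if y = 1 then 4 else if y = 2 then (if n = 4 then 4 else 5)
       else if y = int n - 1 then 2 else if y = int n - 2 then 3 else 4)
    else (if y = 0 then 3 else if y = int n - 1 then 2 else if y = int n - 2 then 3 else 4))"

lemma tau_std:
  assumes n: "n \<ge> 4" and v: "v \<in> std_V n"
  shows "tau (std_V n) (std_E n) v = std_tau n v"
proof -
  obtain x y where xy: "v = (x,y)" by force
  have "x = 0 \<and> (y = 0 \<or> y = 1) \<or> (x = 1 \<or> x = 2) \<and> 0 \<le> y \<and> y < int n"
    using v xy mem_std_V by auto
  then consider "x = 0" "y = 0" | "x = 0" "y = 1" | "x = 1" "y = 0" | "x = 1" "y = 1"
    | "x = 1" "y = 2" | "x = 1" "y = int n - 1" "3 \<le> y" | "x = 1" "y = int n - 2" "3 \<le> y"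
    | "x = 1" "3 \<le> y" "y + 3 \<le> int n" | "x = 2" "y = 0" | "x = 2" "y = int n - 1"
    | "x = 2" "y = int n - 2" | "x = 2" "1 \<le> y" "y + 3 \<le> int n"
    using n by (elim disjE conjE) (smt (verit))+
  then have "card ((\<Union>u\<in>std_nbrs n v. std_nbrs n u) - std_nbrs n v - {v}) = std_tau n v"
    by cases (use n in \<open>simp_all add: xy std_nbrs_def std_tau_def card_insert_if\<close>)
  moreover have "second_nbhd (std_V n) (std_E n) v = (\<Union>u\<in>std_nbrs n v. std_nbrs n u) - std_nbrs n v - {v}"
    using n by (intro second_nbhd_eq_nbrs adj_std_E_iff std_nbrs_subset) simp_all
  ultimately show ?thesis
    by (simp add: tau_eq_card_second_nbhd)
qed

lemma sum_const_plus_deviations: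
  fixes f :: "'a \<Rightarrow> int"
  assumes "finite T" "S \<subseteq> T" "\<And>k. k \<in> T \<Longrightarrow> k \<notin> S \<Longrightarrow> f k = c"
  shows "(\<Sum>k\<in>T. f k) = c * int (card T) + (\<Sum>k\<in>S. f k - c)"
proof -
  have "(\<Sum>k\<in>T. f k) = c * int (card T) + (\<Sum>k\<in>T. f k - c)"
    by (simp add: sum_subtractf mult.commute)
  also have "(\<Sum>k\<in>T. f k - c) = (\<Sum>k\<in>S. f k - c)"
    by (rule sum.mono_neutral_right[OF assms(1,2)]) (use assms(3) in auto)
  finally show ?thesis .
qed

lemma sum_std_tau_sq_col1:
  assumes "n \<ge> 4"
  shows "(\<Sum>k<n. int (std_tau n (1, int k))^2) = 16 * int n - 17 - 2 * (if n = 4 then 1 else 0)"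
proof (cases "n = 4")
  case True
  then show ?thesis by (simp add: std_tau_def eval_nat_numeral)
next
  case False
  with assms have "n \<ge> 5" by simp
  then obtain m where m: "n = m + 5" by (metis add.commute le_Suc_ex)
  have "(\<Sum>k<n. int (std_tau n (1, int k))^2)
      = 16 * int (card {..<n}) + (\<Sum>k\<in>{0,2,n-2,n-1}. int (std_tau n (1, int k))^2 - 16)"
    by (rule sum_const_plus_deviations) (use m in \<open>auto simp: std_tau_def\<close>)
  also have "\<dots> = 16 * int n - 17" using m by (simp add: std_tau_def)
  finally show ?thesis using False by simp
qed

lemma sum_std_tau_sq_col2:
  assumes "n \<ge> 4"
  shows "(\<Sum>k<n. int (std_tau n (2, int k))^2) = 16 * int n - 26"
proof -
  obtain m where m: "n = m + 4" using assms by (metis add.commute le_Suc_ex)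
  have "(\<Sum>k<n. int (std_tau n (2, int k))^2)
      = 16 * int (card {..<n}) + (\<Sum>k\<in>{0,n-2,n-1}. int (std_tau n (2, int k))^2 - 16)"
    by (rule sum_const_plus_deviations) (use m in \<open>auto simp: std_tau_def\<close>)
  also have "\<dots> = 16 * int n - 26" using m by (simp add: std_tau_def)
  finally show ?thesis .
qed

lemma sum_std_tau_rungs:
  assumes "n \<ge> 5"
  shows "(\<Sum>k<n. int (std_tau n (1, int k)) * int (std_tau n (2, int k))) = 16 * int n - 22"
proof -
  obtain m where m: "n = m + 5" using assms by (metis add.commute le_Suc_ex)
  have "(\<Sum>k<n. int (std_tau n (1, int k)) * int (std_tau n (2, int k)))
      = 16 * int (card {..<n})
        + (\<Sum>k\<in>{0,2,n-2,n-1}. int (std_tau n (1, int k)) * int (std_tau n (2, int k)) - 16)"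
    by (rule sum_const_plus_deviations) (use m in \<open>auto simp: std_tau_def\<close>)
  also have "\<dots> = 16 * int n - 22" using m by (simp add: std_tau_def)
  finally show ?thesis .
qed

lemma sum_std_tau_rail1:
  assumes "n \<ge> 5"
  shows "(\<Sum>k<n-1. int (std_tau n (1, int k)) * int (std_tau n (1, int k + 1)))
           = 16 * int n - 26 - (if n = 5 then 1 else 0)"
proof (cases "n = 5")
  case True
  then show ?thesis by (simp add: std_tau_def eval_nat_numeral)
next
  case False
  with assms have "n \<ge> 6" by simp
  then obtain m where m: "n = m + 6" by (metis add.commute le_Suc_ex)
  have "(\<Sum>k<n-1. int (std_tau n (1, int k)) * int (std_tau n (1, int k + 1)))
      = 16 * int (card {..<n-1})
        + (\<Sum>k\<in>{0,1,2,n-3,n-2}. int (std_tau n (1, int k)) * int (std_tau n (1, int k + 1)) - 16)"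
    by (rule sum_const_plus_deviations) (use m in \<open>auto simp: std_tau_def\<close>)
  also have "\<dots> = 16 * int n - 26" using m by (simp add: std_tau_def)
  finally show ?thesis using False by simp
qed

lemma sum_std_tau_rail2:
  assumes "n \<ge> 5"
  shows "(\<Sum>k<n-1. int (std_tau n (2, int k)) * int (std_tau n (2, int k + 1))) = 16 * int n - 34"
proof -
  obtain m where m: "n = m + 5" using assms by (metis add.commute le_Suc_ex)
  have "(\<Sum>k<n-1. int (std_tau n (2, int k)) * int (std_tau n (2, int k + 1)))
      = 16 * int (card {..<n-1})
        + (\<Sum>k\<in>{0,n-3,n-2}. int (std_tau n (2, int k)) * int (std_tau n (2, int k + 1)) - 16)"
    by (rule sum_const_plus_deviations) (use m in \<open>auto simp: std_tau_def\<close>)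
  also have "\<dots> = 16 * int n - 34" using m by (simp add: std_tau_def)
  finally show ?thesis .
qed

lemma ZC1_std:
  assumes "n \<ge> 4"
  shows "int (ZC1 (std_V n) (std_E n)) = 32 * int n - 30 - 2 * (if n = 4 then 1 else 0)"
proof -
  let ?f = "\<lambda>v. int (std_tau n v)^2"
  have "int (ZC1 (std_V n) (std_E n)) = (\<Sum>v\<in>std_V n. ?f v)"
    unfolding ZC1_def using tau_std[OF assms] by simp
  also have "\<dots> = (\<Sum>v\<in>{(0,0),(0,1)}. ?f v)
      + ((\<Sum>v\<in>(\<lambda>k. (1, int k)) ` {..<n}. ?f v) + (\<Sum>v\<in>(\<lambda>k. (2, int k)) ` {..<n}. ?f v))"
    unfolding std_V_def Un_assoc by (subst sum.union_disjoint; (subst sum.union_disjoint)?; auto)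
  also have "\<dots> = 13 + (\<Sum>k<n. int (std_tau n (1, int k))^2) + (\<Sum>k<n. int (std_tau n (2, int k))^2)"
    by (simp add: sum.reindex inj_on_def std_tau_def)
  finally show ?thesis
    using sum_std_tau_sq_col1[OF assms] sum_std_tau_sq_col2[OF assms] by simp
qed

lemma ZC2_std:
  assumes "n \<ge> 5"
  shows "int (ZC2 (std_V n) (std_E n)) = 48 * int n - 58 - (if n = 5 then 1 else 0)"
proof -
  let ?f = "\<lambda>e. \<Prod>v\<in>e. int (std_tau n v)"
  let ?X = "{{(0,0),(1,0)}, {(0,0),(0,1)}, {(0,1),(1,1)}} :: pt set set"
    and ?H = "(\<lambda>k. {(1, int k),(2, int k)}) ` {..<n} :: pt set set"
    and ?L = "\<lambda>a. (\<lambda>k. {(a, int k),(a, int k + 1)}) ` {..<n-1} :: pt set set"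
  have "\<Union>(std_E n) \<subseteq> std_V n"
    unfolding std_E_def using assms by (auto simp: mem_std_V)
  then have "int (ZC2 (std_V n) (std_E n)) = (\<Sum>e\<in>std_E n. ?f e)"
    unfolding ZC2_def of_nat_sum of_nat_prod
    using tau_std assms by (intro sum.cong prod.cong) auto
  also have "\<dots> = sum ?f ?X + (sum ?f ?H + (sum ?f (?L 1) + sum ?f (?L 2)))"
  proof -
    have disj: "?X \<inter> (?H \<union> (?L 1 \<union> ?L 2)) = {}" "?H \<inter> (?L 1 \<union> ?L 2) = {}" "?L 1 \<inter> ?L 2 = {}"
      by (auto simp: doubleton_eq_iff)
    show ?thesis
      unfolding std_E_def Un_assoc
      by (subst sum.union_disjoint, simp, simp, rule disj(1),
          subst sum.union_disjoint, simp, simp, rule disj(2),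
          subst sum.union_disjoint, simp, simp, rule disj(3), rule refl)
  qed
  also have "\<dots> = 24 + (\<Sum>k<n. int (std_tau n (1, int k)) * int (std_tau n (2, int k)))
     + (\<Sum>k<n-1. int (std_tau n (1, int k)) * int (std_tau n (1, int k + 1)))
     + (\<Sum>k<n-1. int (std_tau n (2, int k)) * int (std_tau n (2, int k + 1)))"
  proof -
    have "inj_on (\<lambda>k. {(1::int, int k),(2::int, int k)}) K" for K
      by (rule inj_onI) (simp add: doubleton_eq_iff)
    moreover have "inj_on (\<lambda>k. {(a::int, int k),(a, int k + 1)}) K" for K a
      by (rule inj_onI) (auto simp: doubleton_eq_iff)
    ultimately show ?thesis
      by (simp add: sum.reindex doubleton_eq_iff std_tau_def)
  qed
  finally show ?thesis
    using sum_std_tau_rungs[OF assms] sum_std_tau_rail1[OF assms] sum_std_tau_rail2[OF assms] by simp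
qed

theorem corollary1:
  fixes c :: "nat \<Rightarrow> int \<times> int" and n :: nat
  assumes "is_PC1 c n" and "n \<ge> 4"
  shows "int (ZC1 (chain_V c n) (chain_E c n)) = 32 * int n - 30 - 2 * (if n = 4 then 1 else 0)
     \<and> (n \<ge> 5 \<longrightarrow> int (ZC2 (chain_V c n) (chain_E c n)) = 48 * int n - 58 - (if n = 5 then 1 else 0))"
proof -
  have orth: "orthonormal (step_dir c 0) (step_dir c 1)"
    using assms(1) by (rule is_PC1_orthonormal)
  have std: "chain_V std_square n = std_V n" "chain_E std_square n = std_E n"
    using assms(2) by (simp_all add: chain_std_square)
  have lattice: "\<And>i. i < n \<Longrightarrow> c i = lattice_map (c 0) (step_dir c 0) (step_dir c 1) (std_square i)"
    using assms(1) by (rule is_PC1_lattice_map)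
  have "ZC1 (chain_V c n) (chain_E c n) = ZC1 (std_V n) (std_E n)"
    and "ZC2 (chain_V c n) (chain_E c n) = ZC2 (std_V n) (std_E n)"
    using ZC_lattice_map_chain[OF orth lattice] std by simp_all
  with ZC1_std[OF assms(2)] ZC2_std show ?thesis by simp
qed

end
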